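(* Let $\mu\in\mathbb C$, $\mu\ne1$, and let $x_1,\dots,x_M$ and $y_1,\dots,y_N$ be complex numbers (pairwise distinct within each family and $x_a\neq y_b$, so that the expressions are defined). Then $$\mathcal A^+_{\{y\}}\!\left[\mu E^-_{\{x\}}\right]=(1-\mu)^{N-M}\mathcal A^-_{\{x\}}\!\left[\mu E^+_{\{y\}}\right].$$
   Context: Let $\eta\in\mathbb C\setminus\{0\}$. For a family $\{x\}=\{x_1,\dots,x_M\}$ and $y\in\mathbb C$, $E^\pm_{\{x\}}(y)=\prod_{n=1}^M\frac{y-x_n\pm\eta}{y-x_n}$. With $V(x_1,\dots,x_M)=\prod_{1\le b<a\le M}(x_a-x_b)$, for pairwise distinct $x_a$ and a function $f$ defined there, $\mathcal A^\pm_{\{x\}}[f]=\det_{1\le a,b\le M}[x_a^{b-1}-f(x_a)(x_a\pm\eta)^{b-1}]/V(x_1,\dots,x_M)$. *)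

theory Defs
  imports Complex_Main "Jordan_Normal_Form.Determinant"
begin

definition Eplus :: "complex \<Rightarrow> complex list \<Rightarrow> complex \<Rightarrow> complex" where
  "Eplus eta xs y = (\<Prod>n<length xs. (y - xs ! n + eta) / (y - xs ! n))"

definition Eminus :: "complex \<Rightarrow> complex list \<Rightarrow> complex \<Rightarrow> complex" where
  "Eminus eta xs y = (\<Prod>n<length xs. (y - xs ! n - eta) / (y - xs ! n))"

definition Vand :: "complex list \<Rightarrow> complex" where
  "Vand xs = (\<Prod>(a, b)\<in>{(a, b). b < a \<and> a < length xs}. xs ! a - xs ! b)"

definition Aplus :: "complex \<Rightarrow> complex list \<Rightarrow> (complex \<Rightarrow> complex) \<Rightarrow> complex" where
  "Aplus eta xs f =
     det (mat (length xs) (length xs)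
       (\<lambda>(a, b). (xs ! a) ^ b - f (xs ! a) * (xs ! a + eta) ^ b)) / Vand xs"

definition Aminus :: "complex \<Rightarrow> complex list \<Rightarrow> (complex \<Rightarrow> complex) \<Rightarrow> complex" where
  "Aminus eta xs f =
     det (mat (length xs) (length xs)
       (\<lambda>(a, b). (xs ! a) ^ b - f (xs ! a) * (xs ! a - eta) ^ b)) / Vand xs"

end

theory Submission
  imports Defs
begin

text \<open>Multiplied by \<open>(1 - \<mu>) ^ M\<close>, the identity holds for every \<open>\<mu>\<close>; we prove it in that
  form by induction on \<open>N\<close>. For \<open>N = 0\<close> the matrix \<open>x\<^sub>a\<^sup>b - \<mu> (x\<^sub>a - \<eta>)\<^sup>b\<close> is the
  Vandermonde matrix times a triangular matrix with diagonal \<open>1 - \<mu>\<close>. To add a node \<open>t\<close> to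
  \<open>{y}\<close>, clear the poles at \<open>t = x\<^sub>a\<close> and the Vandermonde denominator: both sides become
  polynomials in \<open>t\<close> of degree at most \<open>M + N\<close> (on the left only the last row depends on
  \<open>t\<close>, on the right every row is linear in \<open>t\<close>). Both vanish at the \<open>y\<^sub>b\<close>; at
  \<open>t = x\<^sub>a\<close> one row becomes a row of powers, whose elimination reduces both sides to the
  identity for \<open>{x} \<setminus> {x\<^sub>a}\<close>; and their coefficients of \<open>t ^ (M + N)\<close> are the two
  sides of the identity for \<open>{x}\<close>. So the polynomials agree, in particular at \<open>t\<close>.\<close>

section \<open>Determinants\<close>

lemma det_mat_scale_rows:
  fixes F :: "nat \<Rightarrow> nat \<Rightarrow> 'a::comm_ring_1"
  shows "det (mat n n (\<lambda>(i,j). c i * F i j)) = (\<Prod>i<n. c i) * det (mat n n (\<lambda>(i,j). F i j))"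
proof -
  have rows: "(\<lambda>i. vec n (F i)) \<in> {0..<n} \<rightarrow> carrier_vec n" by auto
  have "mat n n (\<lambda>(i,j). c i * F i j) = mat\<^sub>r n n (\<lambda>i. c i \<cdot>\<^sub>v vec n (F i))"
    and "mat n n (\<lambda>(i,j). F i j) = mat\<^sub>r n n (\<lambda>i. vec n (F i))"
    by auto
  then show ?thesis by (simp add: det_rows_mul[OF rows] atLeast0LessThan)
qed

text \<open>Right multiplication by the bidiagonal matrix with diagonal 1 and superdiagonal \<open>-z\<close>
  replaces column \<open>j + 1\<close> by column \<open>j + 1\<close> minus \<open>z\<close> times column \<open>j\<close>; this clears
  the last row except for its first entry 1.\<close>

lemma det_last_row_powers:
  fixes B :: "'a::comm_ring_1 mat"
  assumes B: "B \<in> carrier_mat (Suc m) (Suc m)" and last: "\<And>j. j < Suc m \<Longrightarrow> B $$ (m,j) = z ^ j"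
  shows "det B = (-1)^m * det (mat m m (\<lambda>(i,j). B $$ (i, Suc j) - z * B $$ (i,j)))"
proof -
  define C where "C = mat (Suc m) (Suc m) (\<lambda>(i,j). if i = j then 1 else if Suc i = j then -z else (0::'a))"
  have C: "C \<in> carrier_mat (Suc m) (Suc m)" unfolding C_def by auto
  have "diag_mat C = map (\<lambda>i. 1) [0..<Suc m]"
    unfolding diag_mat_def C_def by (intro map_cong) auto
  moreover have "upper_triangular C" unfolding C_def upper_triangular_def by auto
  ultimately have det_C: "det C = 1" using det_upper_triangular[OF _ C] by (simp add: map_replicate_const)
  define BC where "BC = mat (Suc m) (Suc m) (\<lambda>(i,j). if j = 0 then B $$ (i,0) else B $$ (i,j) - z * B $$ (i,j-1))"
  have "B * C = BC"
  proof (rule eq_matI)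
    fix i j assume "i < dim_row BC" "j < dim_col BC"
    then have i: "i < Suc m" and j: "j < Suc m" unfolding BC_def by auto
    have "(B * C) $$ (i,j) = (\<Sum>k<Suc m. B $$ (i,k) * C $$ (k,j))"
      using B C i j by (simp add: scalar_prod_def atLeast0LessThan)
    also have "\<dots> = (\<Sum>k<Suc m. (if k = j then B $$ (i,j) else 0) + (if Suc k = j then -z * B $$ (i,k) else 0))"
      by (rule sum.cong) (auto simp: C_def j)
    also have "\<dots> = BC $$ (i,j)"
      using i j by (cases j) (auto simp: sum.distrib BC_def)
    finally show "(B * C) $$ (i,j) = BC $$ (i,j)" .
  qed (use B C in \<open>auto simp: BC_def\<close>)
  then have "det B = det BC" using det_mult[OF B C] det_C by simp
  also have "\<dots> = (\<Sum>j<Suc m. BC $$ (m,j) * cofactor BC m j)"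
    by (rule laplace_expansion_row) (auto simp: BC_def)
  also have "\<dots> = (\<Sum>j<Suc m. if j = 0 then cofactor BC m 0 else 0)"
    by (rule sum.cong) (auto simp: BC_def last gr0_conv_Suc)
  also have "\<dots> = cofactor BC m 0" by simp
  also have "mat_delete BC m 0 = mat m m (\<lambda>(i,j). B $$ (i, Suc j) - z * B $$ (i,j))"
    by (rule eq_matI) (auto simp: mat_delete_def BC_def)
  then have "cofactor BC m 0 = (-1)^m * det (mat m m (\<lambda>(i,j). B $$ (i, Suc j) - z * B $$ (i,j)))"
    unfolding cofactor_def by simp
  finally show ?thesis .
qed

lemma det_power_row_elim:
  fixes u w \<phi> \<psi> :: "nat \<Rightarrow> 'a::comm_ring_1"
  assumes "\<And>i. i < k \<Longrightarrow> \<phi> i * (w i - z) = \<psi> i * (u i - z)"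
  shows "det (mat (Suc k) (Suc k) (\<lambda>(i,j). if i < k then u i ^ j - \<phi> i * w i ^ j else z ^ j))
       = (-1)^k * (\<Prod>i<k. u i - z) * det (mat k k (\<lambda>(i,j). u i ^ j - \<psi> i * w i ^ j))"
proof -
  let ?M = "mat (Suc k) (Suc k) (\<lambda>(i,j). if i < k then u i ^ j - \<phi> i * w i ^ j else z ^ j)"
  let ?R = "mat k k (\<lambda>(i,j). (u i - z) * (u i ^ j - \<psi> i * w i ^ j))"
  have "mat k k (\<lambda>(i,j). ?M $$ (i, Suc j) - z * ?M $$ (i,j)) = ?R"
  proof (rule eq_matI)
    fix i j assume "i < dim_row ?R" "j < dim_col ?R"
    then have i: "i < k" and j: "j < k" by auto
    have "(u i ^ Suc j - \<phi> i * w i ^ Suc j) - z * (u i ^ j - \<phi> i * w i ^ j)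
        = (u i - z) * u i ^ j - \<phi> i * (w i - z) * w i ^ j"
      by (simp add: algebra_simps)
    also have "\<dots> = (u i - z) * u i ^ j - \<psi> i * (u i - z) * w i ^ j"
      using assms[OF i] by simp
    also have "\<dots> = (u i - z) * (u i ^ j - \<psi> i * w i ^ j)"
      by (simp add: algebra_simps)
    finally show "mat k k (\<lambda>(i,j). ?M $$ (i, Suc j) - z * ?M $$ (i,j)) $$ (i,j) = ?R $$ (i,j)"
      using i j by simp
  qed auto
  then show ?thesis
    by (subst det_last_row_powers[where z = z]) (auto simp: det_mat_scale_rows)
qed

lemma prod_list_map_conv_nth: "(\<Prod>x\<leftarrow>xs. f x) = (\<Prod>i<length xs. f (xs ! i))"
  by (induct xs) (auto simp: prod.lessThan_Suc_shift simp del: prod.lessThan_Suc)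

lemma prod_list_map_remove1:
  fixes f :: "'a \<Rightarrow> 'b::comm_monoid_mult"
  shows "x \<in> set xs \<Longrightarrow> (\<Prod>y\<leftarrow>xs. f y) = f x * (\<Prod>y\<leftarrow>remove1 x xs. f y)"
  by (induct xs) (auto simp: mult.left_commute)

lemma Vand_snoc: "Vand (xs @ [z]) = Vand xs * (\<Prod>x\<leftarrow>xs. z - x)"
proof -
  let ?n = "length xs"
  let ?f = "\<lambda>(a,b). (xs @ [z]) ! a - (xs @ [z]) ! b"
  have pairs: "{(a, b). b < a \<and> a < length (xs @ [z])} = {(a, b). b < a \<and> a < ?n} \<union> (\<lambda>b. (?n, b)) ` {..<?n}"
    by auto
  have "finite {(a, b). b < a \<and> a < ?n}"
    by (rule finite_subset[of _ "{..<?n} \<times> {..<?n}"]) auto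
  then have "Vand (xs @ [z]) = prod ?f {(a, b). b < a \<and> a < ?n} * prod ?f ((\<lambda>b. (?n, b)) ` {..<?n})"
    unfolding Vand_def pairs by (intro prod.union_disjoint) auto
  also have "prod ?f {(a, b). b < a \<and> a < ?n} = Vand xs"
    unfolding Vand_def by (rule prod.cong) (auto simp: nth_append)
  also have "prod ?f ((\<lambda>b. (?n, b)) ` {..<?n}) = (\<Prod>x\<leftarrow>xs. z - x)"
    by (subst prod.reindex) (auto simp: inj_on_def nth_append prod_list_map_conv_nth)
  finally show ?thesis .
qed

lemma Vand_nonzero:
  assumes "distinct xs" shows "Vand xs \<noteq> 0"
proof -
  have "finite {(a, b). b < a \<and> a < length xs}"
    by (rule finite_subset[of _ "{..<length xs} \<times> {..<length xs}"]) auto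
  moreover have "xs ! a \<noteq> xs ! b" if "b < a" "a < length xs" for a b
    using nth_eq_iff_index_eq[OF assms, of a b] that by simp
  ultimately show ?thesis unfolding Vand_def by (subst prod_zero_iff) auto
qed

lemma det_vandermonde: "det (mat (length xs) (length xs) (\<lambda>(a,b). (xs ! a) ^ b)) = Vand xs"
proof (induct xs rule: rev_induct)
  case Nil
  show ?case by (simp add: Vand_def)
next
  case (snoc z xs)
  let ?m = "length xs"
  have "mat (Suc ?m) (Suc ?m) (\<lambda>(a,b). ((xs @ [z]) ! a) ^ b)
      = mat (Suc ?m) (Suc ?m) (\<lambda>(i,j). if i < ?m then (xs ! i) ^ j - 0 * 0 ^ j else z ^ j)"
    by (auto simp: nth_append)
  then have "det (mat (Suc ?m) (Suc ?m) (\<lambda>(a,b). ((xs @ [z]) ! a) ^ b))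
      = (-1)^?m * (\<Prod>i<?m. xs ! i - z) * Vand xs"
    using det_power_row_elim[where u = "(!) xs" and \<phi> = "\<lambda>_. 0" and \<psi> = "\<lambda>_. 0"] snoc by simp
  also have "(-1)^?m * (\<Prod>i<?m. xs ! i - z) = (\<Prod>x\<leftarrow>xs. z - x)"
    by (simp add: prod_diff_swap[of "(!) xs"] prod_list_map_conv_nth)
  finally show ?case by (simp add: Vand_snoc mult.commute)
qed

text \<open>Permuting the nodes changes the determinant and the Vandermonde determinant by the
  same sign (and both vanish together for repeated nodes).\<close>

lemma det_div_Vand_permute:
  fixes F :: "complex \<Rightarrow> nat \<Rightarrow> complex"
  assumes "mset ys = mset xs"
  shows "det (mat (length ys) (length ys) (\<lambda>(a,b). F (ys ! a) b)) / Vand ys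
       = det (mat (length xs) (length xs) (\<lambda>(a,b). F (xs ! a) b)) / Vand xs"
proof -
  obtain p where p: "p permutes {..<length xs}" and ys: "permute_list p xs = ys"
    using mset_eq_permutation[OF assms] by blast
  let ?n = "length xs"
  have len: "length ys = ?n" using assms by (metis size_mset)
  have p': "p permutes {0..<?n}" using p by (simp add: atLeast0LessThan)
  have ys_nth: "ys ! i = xs ! p i" if "i < ?n" for i
    using permute_list_nth[OF p] ys that by blast
  have p_lt: "p i < ?n" if "i < ?n" for i
    using p that by (meson lessThan_iff permutes_in_image)
  have det_ys: "det (mat ?n ?n (\<lambda>(a,b). G (ys ! a) b)) = signof p * det (mat ?n ?n (\<lambda>(a,b). G (xs ! a) b))"
    for G :: "complex \<Rightarrow> nat \<Rightarrow> complex"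
  proof -
    have "mat ?n ?n (\<lambda>(a,b). G (ys ! a) b) = mat ?n ?n (\<lambda>(i,j). mat ?n ?n (\<lambda>(a,b). G (xs ! a) b) $$ (p i, j))"
      by (auto simp: ys_nth p_lt)
    then show ?thesis by (simp add: det_permute_rows[OF _ p'])
  qed
  have "Vand ys = signof p * Vand xs"
    using det_ys[of "\<lambda>x b. x ^ b"] by (simp add: len flip: det_vandermonde)
  moreover have "(signof p :: complex) \<noteq> 0" by (simp add: sign_def)
  ultimately show ?thesis by (simp add: len det_ys)
qed

section \<open>Polynomials\<close>

lemma coeff_mult_at_degree_bounds:
  fixes p q :: "'a::comm_semiring_0 poly"
  assumes "degree p \<le> m" "degree q \<le> n"
  shows "coeff (p * q) (m + n) = coeff p m * coeff q n"
proof -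
  have "coeff p i * coeff q (m + n - i) = (if i = m then coeff p m * coeff q n else 0)" for i
    using assms by (cases i m rule: linorder_cases) (auto simp: coeff_eq_0)
  then show ?thesis by (simp add: coeff_mult)
qed

lemma coeff_prod_degree_le_1:
  fixes f :: "'b \<Rightarrow> 'a::comm_semiring_1 poly"
  assumes "finite I" "\<And>i. i \<in> I \<Longrightarrow> degree (f i) \<le> 1"
  shows "degree (\<Prod>i\<in>I. f i) \<le> card I \<and> coeff (\<Prod>i\<in>I. f i) (card I) = (\<Prod>i\<in>I. coeff (f i) 1)"
  using assms
proof (induct I rule: finite_induct)
  case (insert a I)
  then have "degree (f a) \<le> 1" and IH: "degree (\<Prod>i\<in>I. f i) \<le> card I"
      "coeff (\<Prod>i\<in>I. f i) (card I) = (\<Prod>i\<in>I. coeff (f i) 1)"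
    by auto
  moreover from this have "degree (f a * (\<Prod>i\<in>I. f i)) \<le> 1 + card I"
    using degree_mult_le[of "f a" "\<Prod>i\<in>I. f i"] by linarith
  ultimately show ?case
    using insert coeff_mult_at_degree_bounds[of "f a" 1 _ "card I"] by simp
qed simp

lemma coeff_det_degree_le_1:
  fixes A :: "'a::comm_ring_1 poly mat"
  assumes A: "A \<in> carrier_mat n n" and deg: "\<And>i j. i < n \<Longrightarrow> j < n \<Longrightarrow> degree (A $$ (i,j)) \<le> 1"
  shows "coeff (det A) n = det (map_mat (\<lambda>p. coeff p 1) A)"
proof -
  have "coeff (signof p * (\<Prod>i = 0..<n. A $$ (i, p i))) n
      = signof p * (\<Prod>i = 0..<n. map_mat (\<lambda>p. coeff p 1) A $$ (i, p i))" if "p permutes {0..<n}" for p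
  proof -
    have p_lt: "p i < n" if "i < n" for i using \<open>p permutes _\<close> that by (simp add: permutes_in_image)
    then have "coeff (\<Prod>i = 0..<n. A $$ (i, p i)) (card {0..<n}) = (\<Prod>i = 0..<n. coeff (A $$ (i, p i)) 1)"
      using coeff_prod_degree_le_1[of "{0..<n}" "\<lambda>i. A $$ (i, p i)"] deg by simp
    moreover have "signof p * q = smult (signof p) q" for q :: "'a poly"
      by (simp add: sign_def)
    ultimately show ?thesis using A p_lt by simp
  qed
  moreover have "map_mat (\<lambda>p. coeff p 1) A \<in> carrier_mat n n" using A by simp
  ultimately show ?thesis
    unfolding det_def'[OF A] by (simp add: coeff_sum det_def')
qed

lemma poly_det: "poly (det A) t = det (map_mat (\<lambda>p. poly p t) A)"
proof -
  interpret comm_ring_hom "\<lambda>p. poly p t" by unfold_locales auto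
  show ?thesis by simp
qed

definition root_poly :: "'a::comm_ring_1 list \<Rightarrow> 'a poly" where
  "root_poly xs = (\<Prod>x\<leftarrow>xs. [:-x, 1:])"

lemma poly_root_poly: "poly (root_poly xs) t = (\<Prod>x\<leftarrow>xs. t - x)"
  unfolding root_poly_def by (induct xs) (auto simp: algebra_simps)

lemma degree_root_poly: "degree (root_poly xs) \<le> length xs"
proof (induct xs)
  case (Cons x xs)
  then show ?case
    using degree_mult_le[of "[:-x, 1:]" "root_poly xs"] by (simp add: root_poly_def)
qed (simp add: root_poly_def)

lemma coeff_root_poly: "coeff (root_poly xs) (length xs) = 1"
proof (induct xs)
  case (Cons x xs)
  then show ?case
    using coeff_mult_at_degree_bounds[of "[:-x, 1:]" 1 "root_poly xs" "length xs"] degree_root_poly[of xs]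
    by (simp add: root_poly_def)
qed (simp add: root_poly_def)

definition det_poly_last_row :: "nat \<Rightarrow> (nat \<Rightarrow> nat \<Rightarrow> 'a::comm_ring_1) \<Rightarrow> (nat \<Rightarrow> 'a poly) \<Rightarrow> 'a poly" where
  "det_poly_last_row n R G = (\<Sum>b<Suc n. smult (cofactor (mat (Suc n) (Suc n) (\<lambda>(a,b). R a b)) n b) (G b))"

lemma poly_det_poly_last_row:
  "poly (det_poly_last_row n R G) t
     = det (mat (Suc n) (Suc n) (\<lambda>(a,b). if a < n then R a b else poly (G b) t))"
proof -
  let ?R = "mat (Suc n) (Suc n) (\<lambda>(a,b). R a b)"
  let ?M = "mat (Suc n) (Suc n) (\<lambda>(a,b). if a < n then R a b else poly (G b) t)"
  have "mat_delete ?M n b = mat_delete ?R n b" for b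
    by (rule eq_matI) (auto simp: mat_delete_def)
  then have "cofactor ?M n b = cofactor ?R n b" for b
    by (simp add: cofactor_def)
  then have "det ?M = (\<Sum>b<Suc n. poly (G b) t * cofactor ?R n b)"
    by (subst laplace_expansion_row[of _ "Suc n" n]) auto
  then show ?thesis by (simp add: det_poly_last_row_def poly_sum mult.commute)
qed

lemma degree_det_poly_last_row:
  assumes "\<And>b. b \<le> n \<Longrightarrow> degree (G b) \<le> d + b"
  shows "degree (det_poly_last_row n R G) \<le> d + n"
  unfolding det_poly_last_row_def
proof (intro degree_sum_le)
  fix b assume "b \<in> {..<Suc n}"
  then have "degree (G b) \<le> d + n" using assms[of b] by auto
  then show "degree (smult (cofactor (mat (Suc n) (Suc n) (\<lambda>(a,b). R a b)) n b) (G b)) \<le> d + n"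
    using degree_smult_le order.trans by blast
qed simp

lemma coeff_det_poly_last_row:
  assumes "\<And>b. b \<le> n \<Longrightarrow> degree (G b) \<le> d + b"
  shows "coeff (det_poly_last_row n R G) (d + n) = coeff (G n) (d + n) * det (mat n n (\<lambda>(a,b). R a b))"
proof -
  let ?R = "mat (Suc n) (Suc n) (\<lambda>(a,b). R a b)"
  have "coeff (G b) (d + n) = 0" if "b < n" for b
    using assms[of b] that by (intro coeff_eq_0) auto
  then have "coeff (det_poly_last_row n R G) (d + n) = cofactor ?R n n * coeff (G n) (d + n)"
    by (simp add: det_poly_last_row_def coeff_sum lessThan_Suc)
  moreover have "mat_delete ?R n n = mat n n (\<lambda>(a,b). R a b)"
    by (rule eq_matI) (auto simp: mat_delete_def)
  ultimately show ?thesis by (simp add: cofactor_def)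
qed

section \<open>The determinants \<open>\<A>\<^sup>\<plusminus>\<close>\<close>

definition Adet :: "complex \<Rightarrow> complex list \<Rightarrow> (complex \<Rightarrow> complex) \<Rightarrow> complex" where
  "Adet e xs f = det (mat (length xs) (length xs) (\<lambda>(a,b). (xs ! a) ^ b - f (xs ! a) * (xs ! a + e) ^ b))"

lemma Aplus_conv_Adet: "Aplus e xs f = Adet e xs f / Vand xs"
  unfolding Aplus_def Adet_def ..

lemma Aminus_eq_Aplus: "Aminus e xs f = Aplus (-e) xs f"
  unfolding Aminus_def Aplus_def by simp

lemma Eplus_conv_prod_list: "Eplus e xs y = (\<Prod>x\<leftarrow>xs. (y - x + e) / (y - x))"
  unfolding Eplus_def prod_list_map_conv_nth ..

lemma Eminus_eq_Eplus: "Eminus e xs = Eplus (-e) xs"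
  unfolding Eminus_def Eplus_def by (simp add: fun_eq_iff)

lemma Eplus_remove1:
  "x \<in> set xs \<Longrightarrow> Eplus e xs y = (y - x + e) / (y - x) * Eplus e (remove1 x xs) y"
  unfolding Eplus_conv_prod_list by (rule prod_list_map_remove1)

lemma Eplus_snoc: "Eplus e (ys @ [t]) x = Eplus e ys x * ((x - t + e) / (x - t))"
  unfolding Eplus_conv_prod_list by simp

lemma Eplus_mult_root_poly:
  assumes "t \<notin> set xs"
  shows "Eplus e xs t * poly (root_poly xs) t = poly (root_poly (map (\<lambda>x. x - e) xs)) t"
  using assms unfolding Eplus_conv_prod_list poly_root_poly
  by (induct xs) (auto simp: field_simps)

lemma Adet_not_distinct:
  assumes "\<not> distinct xs" shows "Adet e xs f = 0"
proof -
  obtain i j where "i < length xs" "j < length xs" "i \<noteq> j" "xs ! i = xs ! j"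
    using assms by (auto simp: distinct_conv_nth)
  then show ?thesis
    unfolding Adet_def by (intro det_identical_rows[of _ "length xs" i j]) auto
qed

text \<open>The matrix factors as the Vandermonde matrix times an upper triangular matrix with
  diagonal \<open>1 - c\<close>, by the binomial expansion of \<open>(x + e) ^ b\<close>.\<close>

lemma Adet_const: "Adet e xs (\<lambda>_. c) = (1 - c) ^ length xs * Vand xs"
proof -
  let ?n = "length xs"
  let ?A = "mat ?n ?n (\<lambda>(a,b). (xs ! a) ^ b - c * (xs ! a + e) ^ b)"
  define V where "V = mat ?n ?n (\<lambda>(a,b). (xs ! a) ^ b)"
  define C where "C = mat ?n ?n (\<lambda>(k,b). (if k = b then 1 else 0) - c * of_nat (b choose k) * e ^ (b - k))"
  have V: "V \<in> carrier_mat ?n ?n" and C: "C \<in> carrier_mat ?n ?n" unfolding V_def C_def by auto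
  have "V * C = ?A"
  proof (rule eq_matI)
    fix a b assume "a < dim_row ?A" "b < dim_col ?A"
    then have a: "a < ?n" and b: "b < ?n" by auto
    let ?x = "xs ! a"
    have "(V * C) $$ (a,b) = (\<Sum>k<?n. ?x ^ k * ((if k = b then 1 else 0) - c * of_nat (b choose k) * e ^ (b - k)))"
      using V C a b by (simp add: scalar_prod_def atLeast0LessThan V_def C_def)
    also have "\<dots> = (\<Sum>k<?n. if k = b then ?x ^ b else 0) - c * (\<Sum>k<?n. of_nat (b choose k) * ?x ^ k * e ^ (b - k))"
    proof -
      have "?x ^ k * ((if k = b then 1 else 0) - c * of_nat (b choose k) * e ^ (b - k))
          = (if k = b then ?x ^ b else 0) - c * (of_nat (b choose k) * ?x ^ k * e ^ (b - k))" for k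
        by (simp add: algebra_simps)
      then show ?thesis by (simp only: sum_subtractf sum_distrib_left)
    qed
    also have "(\<Sum>k<?n. of_nat (b choose k) * ?x ^ k * e ^ (b - k)) = (\<Sum>k\<le>b. of_nat (b choose k) * ?x ^ k * e ^ (b - k))"
      using b by (intro sum.mono_neutral_right) auto
    also have "\<dots> = (?x + e) ^ b" by (simp add: binomial_ring)
    finally show "(V * C) $$ (a,b) = ?A $$ (a,b)" using a b by simp
  qed (auto simp: V_def C_def)
  moreover have "det C = (1 - c) ^ ?n"
  proof -
    have "upper_triangular C" unfolding C_def upper_triangular_def by auto
    moreover have "diag_mat C = map (\<lambda>i. 1 - c) [0..<?n]"
      unfolding diag_mat_def C_def by (intro map_cong) auto
    ultimately show ?thesis using det_upper_triangular[OF _ C] by (simp add: map_replicate_const)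
  qed
  moreover have "det V = Vand xs" unfolding V_def by (rule det_vandermonde)
  ultimately show ?thesis unfolding Adet_def using det_mult[OF V C] by (metis mult.commute)
qed

section \<open>Adding a node\<close>

context
  fixes e \<mu> :: complex and xs ys :: "complex list"
begin

text \<open>The last row \<open>t ^ b - \<mu> E\<^sup>-(t) (t + e) ^ b\<close> of the determinant for the nodes
  \<open>ys @ [t]\<close>, with its poles at \<open>xs\<close> cleared by the factor \<open>\<Prod>x\<leftarrow>xs. t - x\<close>.\<close>

definition lhs_row :: "nat \<Rightarrow> complex poly" where
  "lhs_row b = root_poly xs * monom 1 b - smult \<mu> (root_poly (map (\<lambda>x. x + e) xs) * [:e, 1:] ^ b)"

definition lhs_poly :: "complex poly" where
  "lhs_poly = det_poly_last_row (length ys)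
     (\<lambda>a b. (ys ! a) ^ b - \<mu> * Eplus (-e) xs (ys ! a) * (ys ! a + e) ^ b) lhs_row"

lemma poly_lhs_row:
  "poly (lhs_row b) t = poly (root_poly xs) t * t ^ b - \<mu> * poly (root_poly (map (\<lambda>x. x + e) xs)) t * (t + e) ^ b"
  by (simp add: lhs_row_def poly_monom add.commute)

lemma degree_lhs_row: "degree (lhs_row b) \<le> length xs + b"
proof -
  have "degree (root_poly xs * monom 1 b) \<le> length xs + b"
    using degree_mult_le[of "root_poly xs" "monom 1 b"] degree_root_poly[of xs] degree_monom_le[of "1::complex" b]
    by linarith
  moreover have "degree (smult \<mu> (root_poly (map (\<lambda>x. x + e) xs) * [:e, 1:] ^ b)) \<le> length xs + b"
    using degree_mult_le[of "root_poly (map (\<lambda>x. x + e) xs)" "[:e, 1:] ^ b"]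
      degree_root_poly[of "map (\<lambda>x. x + e) xs"] degree_linear_power[of e b]
    by (simp add: order.trans[OF degree_smult_le])
  ultimately show ?thesis unfolding lhs_row_def by (rule degree_diff_le)
qed

lemma coeff_lhs_row: "coeff (lhs_row b) (length xs + b) = 1 - \<mu>"
  using coeff_mult_at_degree_bounds[of "root_poly xs" "length xs" "monom 1 b" b]
    coeff_mult_at_degree_bounds[of "root_poly (map (\<lambda>x. x + e) xs)" "length xs" "[:e, 1:] ^ b" b]
    degree_root_poly[of xs] degree_root_poly[of "map (\<lambda>x. x + e) xs"] coeff_root_poly[of xs]
    coeff_root_poly[of "map (\<lambda>x. x + e) xs"] degree_monom_le[of "1::complex" b]
    degree_linear_power[of e b] coeff_linear_power[of e b]
  by (simp add: lhs_row_def)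

lemma degree_lhs_poly: "degree lhs_poly \<le> length xs + length ys"
  unfolding lhs_poly_def by (rule degree_det_poly_last_row) (rule degree_lhs_row)

lemma coeff_lhs_poly:
  "coeff lhs_poly (length xs + length ys) = (1 - \<mu>) * Adet e ys (\<lambda>y. \<mu> * Eplus (-e) xs y)"
  unfolding lhs_poly_def Adet_def
  by (simp add: coeff_det_poly_last_row degree_lhs_row coeff_lhs_row)

lemma poly_lhs_poly:
  assumes "t \<notin> set xs"
  shows "poly lhs_poly t = poly (root_poly xs) t * Adet e (ys @ [t]) (\<lambda>y. \<mu> * Eplus (-e) xs y)"
proof -
  let ?n = "length ys" and ?zs = "ys @ [t]"
  let ?c = "\<lambda>a. if a = ?n then poly (root_poly xs) t else 1"
  have last: "poly (lhs_row b) t = poly (root_poly xs) t * (t ^ b - \<mu> * Eplus (-e) xs t * (t + e) ^ b)" for b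
    using Eplus_mult_root_poly[OF assms, of "-e"] by (simp add: poly_lhs_row algebra_simps)
  have "mat (Suc ?n) (Suc ?n) (\<lambda>(a,b). if a < ?n then (ys ! a) ^ b - \<mu> * Eplus (-e) xs (ys ! a) * (ys ! a + e) ^ b
          else poly (lhs_row b) t)
      = mat (Suc ?n) (Suc ?n) (\<lambda>(a,b). ?c a * ((?zs ! a) ^ b - \<mu> * Eplus (-e) xs (?zs ! a) * (?zs ! a + e) ^ b))"
    by (auto simp: nth_append last)
  then show ?thesis
    by (simp add: lhs_poly_def poly_det_poly_last_row Adet_def det_mat_scale_rows)
qed

lemma poly_lhs_poly_at_node:
  assumes x: "x \<in> set xs" "x \<notin> set ys"
  shows "poly lhs_poly x = - \<mu> * poly (root_poly (map (\<lambda>x. x + e) xs)) x * poly (root_poly ys) (x + e)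
           * Adet e ys (\<lambda>y. \<mu> * Eplus (-e) (remove1 x xs) y)"
proof -
  let ?n = "length ys"
  let ?c = "\<lambda>a. if a = ?n then - \<mu> * poly (root_poly (map (\<lambda>x. x + e) xs)) x else 1"
  let ?\<phi> = "\<lambda>i. \<mu> * Eplus (-e) xs (ys ! i)" and ?\<psi> = "\<lambda>i. \<mu> * Eplus (-e) (remove1 x xs) (ys ! i)"
  have "poly (root_poly xs) x = 0"
    using x by (simp add: poly_root_poly)
  then have "mat (Suc ?n) (Suc ?n) (\<lambda>(a,b). if a < ?n then (ys ! a) ^ b - ?\<phi> a * (ys ! a + e) ^ b
          else poly (lhs_row b) x)
      = mat (Suc ?n) (Suc ?n) (\<lambda>(a,b). ?c a * (if a < ?n then (ys ! a) ^ b - ?\<phi> a * (ys ! a + e) ^ b else (x + e) ^ b))"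
    by (auto simp: poly_lhs_row)
  then have "poly lhs_poly x = - \<mu> * poly (root_poly (map (\<lambda>x. x + e) xs)) x
      * det (mat (Suc ?n) (Suc ?n) (\<lambda>(a,b). if a < ?n then (ys ! a) ^ b - ?\<phi> a * (ys ! a + e) ^ b else (x + e) ^ b))"
    by (simp add: lhs_poly_def poly_det_poly_last_row det_mat_scale_rows)
  also have "det (mat (Suc ?n) (Suc ?n) (\<lambda>(a,b). if a < ?n then (ys ! a) ^ b - ?\<phi> a * (ys ! a + e) ^ b else (x + e) ^ b))
      = (-1) ^ ?n * (\<Prod>i<?n. ys ! i - (x + e)) * Adet e ys (\<lambda>y. \<mu> * Eplus (-e) (remove1 x xs) y)"
  proof (unfold Adet_def, rule det_power_row_elim)
    fix i assume "i < ?n"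
    then have "ys ! i \<noteq> x" using x by auto
    then have "Eplus (-e) xs (ys ! i) * (ys ! i - x) = Eplus (-e) (remove1 x xs) (ys ! i) * (ys ! i - (x + e))"
      using Eplus_remove1[OF x(1), of "-e" "ys ! i"] by (simp add: field_simps)
    then show "?\<phi> i * (ys ! i + e - (x + e)) = ?\<psi> i * (ys ! i - (x + e))"
      by (simp add: mult.assoc)
  qed
  also have "(-1) ^ ?n * (\<Prod>i<?n. ys ! i - (x + e)) = poly (root_poly ys) (x + e)"
    by (simp add: prod_diff_swap[of "(!) ys"] poly_root_poly prod_list_map_conv_nth)
  finally show ?thesis by (simp only: mult.assoc)
qed

text \<open>The determinant for the nodes \<open>xs\<close> with weight \<open>\<mu> E\<^sup>+\<close> of \<open>ys @ [t]\<close>, each row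
  multiplied by \<open>x - t\<close> to clear the pole: its entries
  \<open>(x - t) x ^ i - \<mu> E\<^sup>+(x) (x - t + e) (x - e) ^ i\<close> are linear in \<open>t\<close>.\<close>

definition rhs_poly :: "complex poly" where
  "rhs_poly = det (mat (length xs) (length xs) (\<lambda>(a,i).
     [:xs ! a * (xs ! a) ^ i - \<mu> * Eplus e ys (xs ! a) * (xs ! a + e) * (xs ! a - e) ^ i,
       \<mu> * Eplus e ys (xs ! a) * (xs ! a - e) ^ i - (xs ! a) ^ i:]))"

lemma poly_rhs_poly:
  "poly rhs_poly t = det (mat (length xs) (length xs) (\<lambda>(a,i).
     (xs ! a - t) * (xs ! a) ^ i - \<mu> * Eplus e ys (xs ! a) * (xs ! a - t + e) * (xs ! a - e) ^ i))"
  unfolding rhs_poly_def poly_det by (rule arg_cong[where f = det]) (auto simp: algebra_simps)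

lemma degree_rhs_poly: "degree rhs_poly \<le> length xs"
proof -
  have "degree rhs_poly \<le> 1 * length xs"
    unfolding rhs_poly_def by (rule degree_det_le) auto
  then show ?thesis by simp
qed

lemma coeff_rhs_poly:
  "coeff rhs_poly (length xs) = (-1) ^ length xs * Adet (-e) xs (\<lambda>x. \<mu> * Eplus e ys x)"
proof -
  let ?m = "length xs"
  have "coeff rhs_poly ?m = det (map_mat (\<lambda>p. coeff p 1) (mat ?m ?m (\<lambda>(a,i).
     [:xs ! a * (xs ! a) ^ i - \<mu> * Eplus e ys (xs ! a) * (xs ! a + e) * (xs ! a - e) ^ i,
       \<mu> * Eplus e ys (xs ! a) * (xs ! a - e) ^ i - (xs ! a) ^ i:])))"
    unfolding rhs_poly_def by (rule coeff_det_degree_le_1) auto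
  also have "map_mat (\<lambda>p. coeff p 1) (mat ?m ?m (\<lambda>(a,i).
     [:xs ! a * (xs ! a) ^ i - \<mu> * Eplus e ys (xs ! a) * (xs ! a + e) * (xs ! a - e) ^ i,
       \<mu> * Eplus e ys (xs ! a) * (xs ! a - e) ^ i - (xs ! a) ^ i:]))
    = (-1) \<cdot>\<^sub>m mat ?m ?m (\<lambda>(a,i). (xs ! a) ^ i - \<mu> * Eplus e ys (xs ! a) * (xs ! a + -e) ^ i)"
    by auto
  finally show ?thesis by (simp add: Adet_def)
qed

lemma poly_rhs_poly_not_node:
  assumes "t \<notin> set xs"
  shows "poly rhs_poly t = (\<Prod>x\<leftarrow>xs. x - t) * Adet (-e) xs (\<lambda>x. \<mu> * Eplus e (ys @ [t]) x)"
proof -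
  let ?m = "length xs"
  have "(x - t) * x ^ i - \<mu> * Eplus e ys x * (x - t + e) * (x - e) ^ i
      = (x - t) * (x ^ i - \<mu> * Eplus e (ys @ [t]) x * (x + - e) ^ i)" if "x \<in> set xs" for x i
  proof -
    have "x - t \<noteq> 0" using that assms by auto
    then show ?thesis by (simp add: Eplus_snoc field_simps)
  qed
  then have "mat ?m ?m (\<lambda>(a,i). (xs ! a - t) * (xs ! a) ^ i - \<mu> * Eplus e ys (xs ! a) * (xs ! a - t + e) * (xs ! a - e) ^ i)
      = mat ?m ?m (\<lambda>(a,i). (xs ! a - t) * ((xs ! a) ^ i - \<mu> * Eplus e (ys @ [t]) (xs ! a) * (xs ! a + - e) ^ i))"
    by auto
  then show ?thesis
    unfolding poly_rhs_poly Adet_def by (simp add: det_mat_scale_rows prod_list_map_conv_nth)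
qed

lemma poly_rhs_poly_at_node:
  assumes x: "x \<in> set xs" and dist: "distinct xs"
  shows "poly rhs_poly x / Vand xs = - \<mu> * e * Eplus e ys x * (\<Prod>x'\<leftarrow>remove1 x xs. x' - x + e)
           * Aplus (-e) (remove1 x xs) (\<lambda>x. \<mu> * Eplus e ys x)"
proof -
  define r where "r = remove1 x xs"
  let ?k = "length r"
  let ?F = "\<lambda>x' i. (x' - x) * x' ^ i - \<mu> * Eplus e ys x' * (x' - x + e) * (x' - e) ^ i"
  let ?\<phi> = "\<lambda>i. \<mu> * Eplus e ys (r ! i) * (r ! i - x + e) / (r ! i - x)"
  let ?\<psi> = "\<lambda>i. \<mu> * Eplus e ys (r ! i)"
  let ?c = "\<lambda>i. if i < ?k then r ! i - x else - \<mu> * e * Eplus e ys x"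
  have mset: "mset (r @ [x]) = mset xs" unfolding r_def using x by simp
  then have len: "length xs = Suc ?k" by (metis length_append_singleton size_mset)
  have x_r: "x \<notin> set r" unfolding r_def using dist by auto
  have r_x: "r ! i \<noteq> x" if "i < ?k" for i using x_r that by auto
  have "poly rhs_poly x / Vand xs = det (mat (Suc ?k) (Suc ?k) (\<lambda>(a,i). ?F ((r @ [x]) ! a) i)) / Vand (r @ [x])"
    using det_div_Vand_permute[OF mset, of ?F] unfolding poly_rhs_poly by (simp add: len)
  also have "mat (Suc ?k) (Suc ?k) (\<lambda>(a,i). ?F ((r @ [x]) ! a) i)
      = mat (Suc ?k) (Suc ?k) (\<lambda>(a,i). ?c a * (if a < ?k then (r ! a) ^ i - ?\<phi> a * (r ! a - e) ^ i else (x - e) ^ i))"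
    by (auto simp: nth_append r_x field_simps)
  also have "det \<dots> = (\<Prod>i<?k. r ! i - x) * (- \<mu> * e * Eplus e ys x)
      * ((-1) ^ ?k * (\<Prod>i<?k. r ! i - (x - e)) * Adet (-e) r (\<lambda>x. \<mu> * Eplus e ys x))"
  proof -
    have "det (mat (Suc ?k) (Suc ?k) (\<lambda>(i,j). if i < ?k then (r ! i) ^ j - ?\<phi> i * (r ! i - e) ^ j else (x - e) ^ j))
        = (-1) ^ ?k * (\<Prod>i<?k. r ! i - (x - e)) * det (mat ?k ?k (\<lambda>(i,j). (r ! i) ^ j - ?\<psi> i * (r ! i - e) ^ j))"
      by (rule det_power_row_elim) (simp add: r_x)
    then show ?thesis by (simp add: det_mat_scale_rows Adet_def)
  qed
  also have "Vand (r @ [x]) = Vand r * (\<Prod>i<?k. x - r ! i)"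
    by (simp add: Vand_snoc prod_list_map_conv_nth)
  also have "(\<Prod>i<?k. r ! i - x) = (-1) ^ ?k * (\<Prod>i<?k. x - r ! i)"
    using prod_diff_swap[of "(!) r" "\<lambda>_. x" "{..<?k}"] by simp
  finally have "poly rhs_poly x / Vand xs = - \<mu> * e * Eplus e ys x * (\<Prod>i<?k. r ! i - x + e)
      * ((\<Prod>i<?k. x - r ! i) / (\<Prod>i<?k. x - r ! i)) * (Adet (-e) r (\<lambda>x. \<mu> * Eplus e ys x) / Vand r)"
    by (simp add: field_simps)
  moreover have "(\<Prod>i<?k. x - r ! i) \<noteq> 0" using r_x by (auto dest: sym)
  ultimately show ?thesis
    by (simp add: r_def[symmetric] Aplus_conv_Adet prod_list_map_conv_nth)
qed

lemma duality_lead_coeff: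
  assumes IH: "(1 - \<mu>) ^ length xs * Aplus e ys (\<lambda>y. \<mu> * Eplus (-e) xs y)
             = (1 - \<mu>) ^ length ys * Aplus (-e) xs (\<lambda>x. \<mu> * Eplus e ys x)"
  shows "(1 - \<mu>) ^ length xs / Vand ys * coeff lhs_poly (length xs + length ys)
       = (1 - \<mu>) ^ Suc (length ys) * (-1) ^ length xs / Vand xs
         * coeff (rhs_poly * root_poly ys) (length xs + length ys)"
proof -
  have "coeff (rhs_poly * root_poly ys) (length xs + length ys)
      = (-1) ^ length xs * Adet (-e) xs (\<lambda>x. \<mu> * Eplus e ys x)"
    using coeff_mult_at_degree_bounds[OF degree_rhs_poly degree_root_poly]
    by (simp add: coeff_rhs_poly coeff_root_poly)
  moreover have "(-1) ^ length xs * (-1) ^ length xs = (1::complex)"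
    by (simp flip: power_mult_distrib)
  ultimately have "(1 - \<mu>) ^ Suc (length ys) * (-1) ^ length xs / Vand xs
      * coeff (rhs_poly * root_poly ys) (length xs + length ys)
      = (1 - \<mu>) * ((1 - \<mu>) ^ length ys * Aplus (-e) xs (\<lambda>x. \<mu> * Eplus e ys x))"
    by (simp add: Aplus_conv_Adet)
  also have "\<dots> = (1 - \<mu>) * ((1 - \<mu>) ^ length xs * Aplus e ys (\<lambda>y. \<mu> * Eplus (-e) xs y))"
    by (simp add: IH)
  also have "\<dots> = (1 - \<mu>) ^ length xs / Vand ys * coeff lhs_poly (length xs + length ys)"
    by (simp add: coeff_lhs_poly Aplus_conv_Adet)
  finally show ?thesis ..
qed

lemma duality_at_node:
  assumes x: "x \<in> set xs" "x \<notin> set ys" and dist: "distinct xs"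
    and IH: "(1 - \<mu>) ^ length (remove1 x xs) * Aplus e ys (\<lambda>y. \<mu> * Eplus (-e) (remove1 x xs) y)
           = (1 - \<mu>) ^ length ys * Aplus (-e) (remove1 x xs) (\<lambda>x. \<mu> * Eplus e ys x)"
  shows "(1 - \<mu>) ^ length xs / Vand ys * poly lhs_poly x
       = (1 - \<mu>) ^ Suc (length ys) * (-1) ^ length xs / Vand xs * poly (rhs_poly * root_poly ys) x"
proof -
  define r where "r = remove1 x xs"
  define P where "P = (\<Prod>x'\<leftarrow>r. x' - x + e)"
  define A where "A = Aplus (-e) r (\<lambda>x. \<mu> * Eplus e ys x)"
  have len: "length xs = Suc (length r)"
    unfolding r_def using x(1) by (simp add: length_remove1) (metis Suc_pred length_pos_if_in_set)
  have shifted_roots: "poly (root_poly (map (\<lambda>x. x + e) xs)) x = (-1) ^ length xs * e * P"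
  proof -
    have "poly (root_poly (map (\<lambda>x. x + e) xs)) x = (x - (x + e)) * (\<Prod>x'\<leftarrow>r. x - (x' + e))"
      unfolding poly_root_poly r_def using prod_list_map_remove1[OF x(1), of "\<lambda>x'. x - (x' + e)"]
      by (simp add: o_def)
    also have "(\<Prod>x'\<leftarrow>r. x - (x' + e)) = (-1) ^ length r * P"
      unfolding P_def prod_list_map_conv_nth using prod_diff_swap[of "\<lambda>_. x" "\<lambda>i. r ! i + e" "{..<length r}"]
      by (simp add: algebra_simps)
    finally show ?thesis by (simp add: len)
  qed
  have shifted_ys: "Eplus e ys x * poly (root_poly ys) x = poly (root_poly ys) (x + e)"
    using Eplus_mult_root_poly[OF x(2), of e] by (simp add: poly_root_poly o_def algebra_simps)
  have "(1 - \<mu>) ^ length xs / Vand ys * poly lhs_poly x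
      = - \<mu> * poly (root_poly (map (\<lambda>x. x + e) xs)) x * poly (root_poly ys) (x + e) * (1 - \<mu>)
        * ((1 - \<mu>) ^ length r * Aplus e ys (\<lambda>y. \<mu> * Eplus (-e) r y))"
    by (simp add: poly_lhs_poly_at_node x r_def[symmetric] Aplus_conv_Adet len)
  also have "\<dots> = (1 - \<mu>) ^ Suc (length ys) * (-1) ^ length xs
        * (- \<mu> * e * Eplus e ys x * P * A) * poly (root_poly ys) x"
    using IH by (simp add: r_def[symmetric] A_def shifted_roots flip: shifted_ys)
  also have "\<dots> = (1 - \<mu>) ^ Suc (length ys) * (-1) ^ length xs
        * (poly rhs_poly x / Vand xs) * poly (root_poly ys) x"
    by (simp add: poly_rhs_poly_at_node[OF x(1) dist] r_def[symmetric] P_def A_def)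
  also have "\<dots> = (1 - \<mu>) ^ Suc (length ys) * (-1) ^ length xs / Vand xs * poly (rhs_poly * root_poly ys) x"
    by simp
  finally show ?thesis .
qed

lemma duality_poly_eq:
  assumes dist: "distinct xs" "distinct ys" and disj: "set xs \<inter> set ys = {}"
    and IH: "\<And>xs'. distinct xs' \<Longrightarrow> set xs' \<subseteq> set xs \<Longrightarrow>
      (1 - \<mu>) ^ length xs' * Aplus e ys (\<lambda>y. \<mu> * Eplus (-e) xs' y)
        = (1 - \<mu>) ^ length ys * Aplus (-e) xs' (\<lambda>x. \<mu> * Eplus e ys x)"
  shows "smult ((1 - \<mu>) ^ length xs / Vand ys) lhs_poly
       = smult ((1 - \<mu>) ^ Suc (length ys) * (-1) ^ length xs / Vand xs) (rhs_poly * root_poly ys)"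
    (is "?L = ?R")
proof (rule poly_eqI_degree_lead_coeff[of _ "length xs + length ys" _ "set (xs @ ys)"])
  let ?m = "length xs" and ?n = "length ys"
  show "coeff ?L (?m + ?n) = coeff ?R (?m + ?n)"
    using duality_lead_coeff[OF IH[OF dist(1) order.refl]] by simp
  show "?m + ?n \<le> card (set (xs @ ys))"
    using dist disj by (simp add: card_Un_disjoint distinct_card)
  show "degree ?L \<le> ?m + ?n"
    using degree_lhs_poly degree_smult_le order.trans by blast
  have "degree (rhs_poly * root_poly ys) \<le> ?m + ?n"
    using degree_mult_le[of rhs_poly "root_poly ys"] degree_rhs_poly degree_root_poly[of ys]
    by linarith
  then show "degree ?R \<le> ?m + ?n"
    using degree_smult_le order.trans by blast
next
  fix z assume "z \<in> set (xs @ ys)"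
  then consider (x) "z \<in> set xs" | (y) "z \<in> set ys" by auto
  then show "poly ?L z = poly ?R z"
  proof cases
    case x
    then have "z \<notin> set ys" using disj by auto
    moreover have "distinct (remove1 z xs)" "set (remove1 z xs) \<subseteq> set xs"
      using dist(1) by (auto dest: in_set_remove1)
    ultimately show ?thesis
      using duality_at_node[OF x _ dist(1) IH] by simp
  next
    case y
    then have "z \<notin> set xs" using disj by auto
    then have "poly lhs_poly z = 0"
      using y by (simp add: poly_lhs_poly Adet_not_distinct)
    moreover have "poly (root_poly ys) z = 0"
      using y by (simp add: poly_root_poly)
    ultimately show ?thesis by simp
  qed
qed

lemma Aplus_duality_step:
  assumes dist: "distinct xs" "distinct ys" and t: "t \<notin> set xs" "t \<notin> set ys"
    and disj: "set xs \<inter> set ys = {}"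
    and IH: "\<And>xs'. distinct xs' \<Longrightarrow> set xs' \<subseteq> set xs \<Longrightarrow>
      (1 - \<mu>) ^ length xs' * Aplus e ys (\<lambda>y. \<mu> * Eplus (-e) xs' y)
        = (1 - \<mu>) ^ length ys * Aplus (-e) xs' (\<lambda>x. \<mu> * Eplus e ys x)"
  shows "(1 - \<mu>) ^ length xs * Aplus e (ys @ [t]) (\<lambda>y. \<mu> * Eplus (-e) xs y)
       = (1 - \<mu>) ^ length (ys @ [t]) * Aplus (-e) xs (\<lambda>x. \<mu> * Eplus e (ys @ [t]) x)"
proof -
  let ?m = "length xs" and ?n = "length ys"
  have P_t: "poly (root_poly xs) t \<noteq> 0" and Y_t: "poly (root_poly ys) t \<noteq> 0"
    using t by (auto simp: poly_root_poly)
  have "Vand (ys @ [t]) = Vand ys * poly (root_poly ys) t"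
    by (simp add: Vand_snoc poly_root_poly)
  then have L_t: "(1 - \<mu>) ^ ?m / Vand ys * poly lhs_poly t = (1 - \<mu>) ^ ?m * poly (root_poly xs) t
      * poly (root_poly ys) t * Aplus e (ys @ [t]) (\<lambda>y. \<mu> * Eplus (-e) xs y)"
    using Vand_nonzero[OF dist(2)] Y_t by (simp add: poly_lhs_poly t Aplus_conv_Adet)
  have "(-1) ^ ?m * (\<Prod>x\<leftarrow>xs. x - t) = poly (root_poly xs) t"
    using prod_diff_swap[of "(!) xs" "\<lambda>_. t" "{..<?m}"]
    by (simp add: poly_root_poly prod_list_map_conv_nth)
  moreover have "(1 - \<mu>) ^ Suc ?n * (-1) ^ ?m / Vand xs * poly (rhs_poly * root_poly ys) t
      = (1 - \<mu>) ^ Suc ?n * ((-1) ^ ?m * (\<Prod>x\<leftarrow>xs. x - t)) * poly (root_poly ys) t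
        * (Adet (-e) xs (\<lambda>x. \<mu> * Eplus e (ys @ [t]) x) / Vand xs)"
    by (simp add: poly_rhs_poly_not_node t mult_ac)
  ultimately have R_t: "(1 - \<mu>) ^ Suc ?n * (-1) ^ ?m / Vand xs * poly (rhs_poly * root_poly ys) t
      = (1 - \<mu>) ^ Suc ?n * poly (root_poly xs) t * poly (root_poly ys) t
        * Aplus (-e) xs (\<lambda>x. \<mu> * Eplus e (ys @ [t]) x)"
    by (simp add: Aplus_conv_Adet)
  have "(1 - \<mu>) ^ ?m / Vand ys * poly lhs_poly t
      = (1 - \<mu>) ^ Suc ?n * (-1) ^ ?m / Vand xs * poly (rhs_poly * root_poly ys) t"
    using arg_cong[OF duality_poly_eq[OF dist disj IH], of "\<lambda>p. poly p t"] by simp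
  then show ?thesis
    using L_t R_t P_t Y_t by (simp add: mult.assoc)
qed

end

lemma Aplus_duality:
  assumes "distinct xs" "distinct ys" "set xs \<inter> set ys = {}"
  shows "(1 - \<mu>) ^ length xs * Aplus e ys (\<lambda>y. \<mu> * Eplus (-e) xs y)
       = (1 - \<mu>) ^ length ys * Aplus (-e) xs (\<lambda>x. \<mu> * Eplus e ys x)"
  using assms
proof (induct ys arbitrary: xs rule: rev_induct)
  case Nil
  have "Aplus e [] f = 1" for f by (simp add: Aplus_conv_Adet Adet_def Vand_def)
  moreover have "Aplus (-e) xs (\<lambda>_. \<mu>) = (1 - \<mu>) ^ length xs"
    using Vand_nonzero[OF Nil(1)] by (simp add: Aplus_conv_Adet Adet_const)
  ultimately show ?case by (simp add: Eplus_def)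
next
  case (snoc t ys)
  then show ?case
    by (intro Aplus_duality_step) (auto intro: snoc.hyps)
qed

theorem mainTheorem7:
  fixes eta mu :: complex and xs ys :: "complex list"
  assumes "eta \<noteq> 0" and "mu \<noteq> 1"
    and "distinct xs" and "distinct ys"
    and "set xs \<inter> set ys = {}"
  shows "Aplus eta ys (\<lambda>y. mu * Eminus eta xs y)
       = (1 - mu) powi (int (length ys) - int (length xs)) * Aminus eta xs (\<lambda>x. mu * Eplus eta ys x)"
proof -
  have "(1 - mu) ^ length xs * Aplus eta ys (\<lambda>y. mu * Eminus eta xs y)
      = (1 - mu) ^ length ys * Aminus eta xs (\<lambda>x. mu * Eplus eta ys x)"
    using Aplus_duality[OF assms(3-5), of mu eta] by (simp add: Eminus_eq_Eplus Aminus_eq_Aplus)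
  moreover have "1 - mu \<noteq> 0" using assms(2) by simp
  ultimately show ?thesis
    by (simp add: power_int_diff field_simps)
qed

end
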